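(* Let $\mathbb K\subset\mathbb{R}^n$ be bounded and let $f:\mathbb K\to\mathbb{R}$ be 1-Lipschitz with respect to the $\ell_\infty$-norm. Then for every $\epsilon>0$ there exist finitely many functions $f_1,\dots,f_m$ such that for all $\mathbf x\in\mathbb K$, $$\max_i f_i(\mathbf x)\le f(\mathbf x)\le\max_i f_i(\mathbf x)+\epsilon,$$ where each $f_i$ has the form $f_i(\mathbf x)=\min_{1\le j\le n}\{x_j-w^{(i)}_j,\;w^{(i)}_j-x_j\}+b_i$ for some $\mathbf w^{(i)}\in\mathbb{R}^n$ and $b_i\in\mathbb{R}$. *)

theory Defs
  imports "HOL-Analysis.Analysis"
begin

definition linf_dist :: "real ^ 'n \<Rightarrow> real ^ 'n \<Rightarrow> real" where
  "linf_dist x y = Max ((\<lambda>j. \<bar>x $ j - y $ j\<bar>) ` UNIV)"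

definition linf_1_lipschitz_on :: "(real ^ 'n) set \<Rightarrow> (real ^ 'n \<Rightarrow> real) \<Rightarrow> bool" where
  "linf_1_lipschitz_on K f \<longleftrightarrow> (\<forall>x\<in>K. \<forall>y\<in>K. \<bar>f x - f y\<bar> \<le> linf_dist x y)"

definition minpiece :: "real ^ 'n \<Rightarrow> real \<Rightarrow> real ^ 'n \<Rightarrow> real" where
  "minpiece w b x = Min ((\<lambda>j. min (x $ j - w $ j) (w $ j - x $ j)) ` UNIV) + b"

end

theory Submission
  imports Defs
begin

text \<open>Each piece is an inverted cone: minpiece w b x = b - linf_dist x w. Taking cones
  with apex f c at the points c of a finite (\<epsilon>/2)-net of K, the 1-Lipschitz property puts
  every cone below f on K, while the cone at a net point within \<epsilon>/2 of x lies at most \<epsilon>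
  below f x.\<close>

lemma linf_dist_le_dist: "linf_dist x y \<le> dist x y"
  using component_le_norm_cart[of "x - y"] by (simp add: linf_dist_def dist_norm)

lemma minpiece_eq_minus_linf_dist: "minpiece w b x = b - linf_dist x w"
proof -
  have "min (x $ j - w $ j) (w $ j - x $ j) = - \<bar>x $ j - w $ j\<bar>" for j
    by simp
  then have "(\<lambda>j. min (x $ j - w $ j) (w $ j - x $ j)) ` UNIV = uminus ` (\<lambda>j. \<bar>x $ j - w $ j\<bar>) ` UNIV"
    by (simp add: image_image)
  moreover have "Min (uminus ` A) = - Max A" if "finite A" "A \<noteq> {}" for A :: "real set"
    using that by (intro Min_eqI) auto
  ultimately show ?thesis
    unfolding minpiece_def linf_dist_def by simp
qed

lemma bounded_obtains_finite_net:
  fixes K :: "'a::heine_borel set"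
  assumes "bounded K" and "e > 0"
  obtains C where "finite C" "C \<subseteq> K" "K \<subseteq> (\<Union>c\<in>C. ball c e)"
proof -
  have "Met_TC.mtotally_bounded K"
    using assms(1) by (intro Met_TC.compact_closure_of_imp_mtotally_bounded) simp_all
  then show ?thesis
    using assms(2) that unfolding Met_TC.mtotally_bounded_def by auto
qed

lemma Max_minpiece_le:
  assumes "linf_1_lipschitz_on K f" "finite C" "C \<noteq> {}" "C \<subseteq> K" "x \<in> K"
  shows "(MAX c\<in>C. minpiece c (f c) x) \<le> f x"
proof -
  have "minpiece c (f c) x \<le> f x" if "c \<in> C" for c
  proof -
    have "\<bar>f x - f c\<bar> \<le> linf_dist x c"
      using assms that unfolding linf_1_lipschitz_on_def by blast
    then show ?thesis
      by (simp add: minpiece_eq_minus_linf_dist abs_le_iff)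
  qed
  then show ?thesis
    using assms(2,3) by simp
qed

lemma le_Max_minpiece:
  assumes "linf_1_lipschitz_on K f" "finite C" "C \<subseteq> K" "x \<in> K" "c \<in> C"
    and "linf_dist x c \<le> \<delta>"
  shows "f x \<le> (MAX c\<in>C. minpiece c (f c) x) + 2 * \<delta>"
proof -
  have "\<bar>f x - f c\<bar> \<le> linf_dist x c"
    using assms unfolding linf_1_lipschitz_on_def by blast
  then have "f x \<le> minpiece c (f c) x + 2 * \<delta>"
    using assms(6) by (simp add: minpiece_eq_minus_linf_dist abs_le_iff)
  also have "minpiece c (f c) x \<le> (MAX c\<in>C. minpiece c (f c) x)"
    using assms(2,5) by simp
  finally show ?thesis
    by simp
qed

theorem lemma1:
  fixes K :: "(real ^ 'n) set" and f :: "real ^ 'n \<Rightarrow> real" and \<epsilon> :: real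
  assumes "bounded K"
    and "linf_1_lipschitz_on K f"
    and "\<epsilon> > 0"
  shows "\<exists>m::nat. \<exists>w :: nat \<Rightarrow> real ^ 'n. \<exists>b :: nat \<Rightarrow> real. m \<ge> 1 \<and>
           (\<forall>x\<in>K. (MAX i\<in>{..<m}. minpiece (w i) (b i) x) \<le> f x \<and>
                   f x \<le> (MAX i\<in>{..<m}. minpiece (w i) (b i) x) + \<epsilon>)"
proof (cases "K = {}")
  case True
  then show ?thesis
    by (intro exI[of _ 1]) simp
next
  case False
  obtain C where C: "finite C" "C \<subseteq> K" "K \<subseteq> (\<Union>c\<in>C. ball c (\<epsilon>/2))"
    by (rule bounded_obtains_finite_net[OF assms(1) half_gt_zero[OF assms(3)]])
  then have "C \<noteq> {}"
    using False by blast
  define n where "n = card C"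
  obtain h where "bij_betw h {..<n} C"
    using ex_bij_betw_nat_finite[OF C(1)] by (auto simp: n_def atLeast0LessThan)
  then have hC: "h ` {..<n} = C"
    by (rule bij_betw_imp_surj_on)
  have reindex: "(MAX i\<in>{..<n}. minpiece (h i) (f (h i)) x) = (MAX c\<in>C. minpiece c (f c) x)" for x
    unfolding hC[symmetric] image_image ..
  show ?thesis
  proof (intro exI conjI ballI)
    show "1 \<le> n"
      using C(1) \<open>C \<noteq> {}\<close> by (simp add: n_def Suc_le_eq card_gt_0_iff)
    fix x assume "x \<in> K"
    show "(MAX i\<in>{..<n}. minpiece (h i) (f (h i)) x) \<le> f x"
      unfolding reindex using Max_minpiece_le[OF assms(2) C(1) \<open>C \<noteq> {}\<close> C(2) \<open>x \<in> K\<close>] .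
    obtain c where "c \<in> C" "dist x c < \<epsilon>/2"
      using C(3) \<open>x \<in> K\<close> by (auto simp: dist_commute)
    then show "f x \<le> (MAX i\<in>{..<n}. minpiece (h i) (f (h i)) x) + \<epsilon>"
      unfolding reindex
      using le_Max_minpiece[OF assms(2) C(1,2) \<open>x \<in> K\<close>, of c "\<epsilon>/2"] linf_dist_le_dist[of x c]
      by simp
  qed
qed

end
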